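(* On every MAPF-DL instance, and for every choice of tie-breaking, of collisions selected for branching, and of paths returned by the low-level search, CBS-DL generates only finitely many constraint-tree nodes.
   Context: MAPF-DL. An instance consists of a deadline $T_{\mathrm{end}}\in\mathbb{N}$, a finite undirected graph $G=(V,E)$, and $M$ agents $a_1,\dots,a_M$; agent $a_i$ has a start vertex $s_i$ and a goal vertex $g_i$, and the graph distance from $s_i$ to $g_i$ is at most $T_{\mathrm{end}}$. A path for $a_i$ is a map $l_i:\{0,\dots,T_{\mathrm{end}}\}\to V$ with $l_i(0)=s_i$, $l_i(T_{\mathrm{end}})=g_i$, and for each $t\ge1$ either $(l_i(t-1),l_i(t))\in E$ or $l_i(t-1)=l_i(t)$. A plan assigns a path to each agent of some subset (the successful agents); the others are unsuccessful and get no path. Two distinct successful agents $a_i,a_j$ have a vertex collision $(a_i,a_j,v,t)$ if $l_i(t)=l_j(t)=v$, and an edge collision $(a_i,a_j,u,v,t)$ if $u=l_i(t)=l_j(t+1)$ and $v=l_j(t)=l_i(t+1)$. A solution is a plan with no collisions; its cost is the number of unsuccessful agents. Constraints: a vertex constraint $(a_i,v,t)$ forbids $l_i(t)=v$; an edge constraint $(a_i,u,v,t)$ forbids $l_i(t)=u$ together with $l_i(t+1)=v$. A path for $a_i$ obeys a constraint set $C$ if it violates none of the constraints in $C$ concerning $a_i$. Algorithm CBS-DL. Low-level search: given agent $a_i$ and constraint set $C$, it returns some path for $a_i$ obeying $C$ if one exists, and otherwise returns "no path". The high level performs best-first search over a constraint tree (CT); each CT node $N$ has a constraint set $N.C$,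 a plan $N.\mathrm{plan}$, and cost $N.\mathrm{cost}$ = number of agents without a path in $N.\mathrm{plan}$. The root has $C=\emptyset$ and the plan containing a low-level path for every agent (cost $0$). OPEN initially contains the root. Repeat: remove from OPEN a node $N$ of minimum cost (ties arbitrary). If $N.\mathrm{plan}$ has no collision, return it. Otherwise pick some collision in $N.\mathrm{plan}$. For a vertex collision $(a_i,a_j,v,t)$ create two children: one with constraints $N.C\cup\{(a_i,v,t)\}$ and one with $N.C\cup\{(a_j,v,t)\}$; for an edge collision $(a_i,a_j,u,v,t)$ the children get $N.C\cup\{(a_i,u,v,t)\}$ and $N.C\cup\{(a_j,v,u,t)\}$, respectively. Each child copies $N.\mathrm{plan}$, and then the path of the agent named in its new constraint is replaced by the low-level search result for that agent under the child's constraint set (the agent's path is deleted if "no path" is returned); the child's cost is recomputed and the child is inserted into OPEN. *)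

theory Defs
  imports Main "HOL-Library.Multiset"
begin

record 'v inst =
  Tend :: nat
  Vs :: "'v set"
  Es :: "('v \<times> 'v) set"
  nag :: nat
  st :: "nat \<Rightarrow> 'v"
  gl :: "nat \<Rightarrow> 'v"

definition valid_instance :: "'v inst \<Rightarrow> bool" where
  "valid_instance I \<longleftrightarrow> finite (Vs I) \<and> Es I \<subseteq> Vs I \<times> Vs I \<and> sym (Es I) \<and>
     (\<forall>i < nag I. st I i \<in> Vs I \<and> gl I i \<in> Vs I \<and>
        (\<exists>k \<le> Tend I. (st I i, gl I i) \<in> Es I ^^ k))"

text \<open>A path for agent i: the list [l(0), ..., l(Tend)].\<close>
definition is_path :: "'v inst \<Rightarrow> nat \<Rightarrow> 'v list \<Rightarrow> bool" where
  "is_path I i p \<longleftrightarrow> length p = Suc (Tend I) \<and> (\<forall>t \<le> Tend I. p ! t \<in> Vs I) \<and>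
     p ! 0 = st I i \<and> p ! Tend I = gl I i \<and>
     (\<forall>t < Tend I. (p ! t, p ! Suc t) \<in> Es I \<or> p ! t = p ! Suc t)"

text \<open>Constraints: VCon i v t (vertex constraint (a_i,v,t)),
  ECon i u v t (edge constraint (a_i,u,v,t)).\<close>
datatype 'v constr = VCon nat 'v nat | ECon nat 'v 'v nat

definition obeys :: "'v inst \<Rightarrow> 'v constr set \<Rightarrow> nat \<Rightarrow> 'v list \<Rightarrow> bool" where
  "obeys I C i p \<longleftrightarrow>
     (\<forall>v t. VCon i v t \<in> C \<longrightarrow> \<not> (t \<le> Tend I \<and> p ! t = v)) \<and>
     (\<forall>u v t. ECon i u v t \<in> C \<longrightarrow> \<not> (t < Tend I \<and> p ! t = u \<and> p ! Suc t = v))"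

definition lowlevel_ok :: "'v inst \<Rightarrow> nat \<Rightarrow> 'v constr set \<Rightarrow> 'v list option \<Rightarrow> bool" where
  "lowlevel_ok I i C r \<longleftrightarrow>
     (r = None \<and> \<not> (\<exists>p. is_path I i p \<and> obeys I C i p)) \<or>
     (\<exists>p. r = Some p \<and> is_path I i p \<and> obeys I C i p)"

type_synonym 'v plan = "nat \<Rightarrow> 'v list option"

definition vertex_collision :: "'v inst \<Rightarrow> 'v plan \<Rightarrow> nat \<Rightarrow> nat \<Rightarrow> 'v \<Rightarrow> nat \<Rightarrow> bool" where
  "vertex_collision I P i j v t \<longleftrightarrow> i < nag I \<and> j < nag I \<and> i \<noteq> j \<and>
     (\<exists>pi pj. P i = Some pi \<and> P j = Some pj \<and> t \<le> Tend I \<and> pi ! t = v \<and> pj ! t = v)"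

definition edge_collision :: "'v inst \<Rightarrow> 'v plan \<Rightarrow> nat \<Rightarrow> nat \<Rightarrow> 'v \<Rightarrow> 'v \<Rightarrow> nat \<Rightarrow> bool" where
  "edge_collision I P i j u v t \<longleftrightarrow> i < nag I \<and> j < nag I \<and> i \<noteq> j \<and>
     (\<exists>pi pj. P i = Some pi \<and> P j = Some pj \<and> t < Tend I \<and>
        pi ! t = u \<and> pj ! Suc t = u \<and> pj ! t = v \<and> pi ! Suc t = v)"

definition has_collision :: "'v inst \<Rightarrow> 'v plan \<Rightarrow> bool" where
  "has_collision I P \<longleftrightarrow> (\<exists>i j v t. vertex_collision I P i j v t) \<or>
                         (\<exists>i j u v t. edge_collision I P i j u v t)"

definition cost :: "'v inst \<Rightarrow> 'v plan \<Rightarrow> nat" where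
  "cost I P = card {i. i < nag I \<and> P i = None}"

type_synonym 'v node = "'v constr set \<times> 'v plan"

text \<open>High-level state: Running OPEN n  (n = number of CT nodes generated so far),
  or Halted n once the algorithm has returned / stopped.\<close>
datatype 'v state = Running "'v node multiset" nat | Halted nat

fun gen_count :: "'v state \<Rightarrow> nat" where
  "gen_count (Running _ n) = n"
| "gen_count (Halted n) = n"

definition min_cost_in :: "'v inst \<Rightarrow> 'v node \<Rightarrow> 'v node multiset \<Rightarrow> bool" where
  "min_cost_in I N OP \<longleftrightarrow> N \<in># OP \<and> (\<forall>N' \<in># OP. cost I (snd N) \<le> cost I (snd N'))"

text \<open>One iteration of the CBS-DL high level; all choices (tie-breaking, collision,
  low-level paths) are nondeterministic.\<close>
inductive cbs_step :: "'v inst \<Rightarrow> 'v state \<Rightarrow> 'v state \<Rightarrow> bool" for I where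
  empty_open: "cbs_step I (Running {#} n) (Halted n)"
| solution: "min_cost_in I (C, P) OP \<Longrightarrow> \<not> has_collision I P \<Longrightarrow>
     cbs_step I (Running OP n) (Halted n)"
| expand_vertex: "min_cost_in I (C, P) OP \<Longrightarrow> vertex_collision I P i j v t \<Longrightarrow>
     lowlevel_ok I i (insert (VCon i v t) C) r1 \<Longrightarrow>
     lowlevel_ok I j (insert (VCon j v t) C) r2 \<Longrightarrow>
     cbs_step I (Running OP n)
       (Running (OP - {#(C, P)#} + {#(insert (VCon i v t) C, P(i := r1)),
                                   (insert (VCon j v t) C, P(j := r2))#}) (n + 2))"
| expand_edge: "min_cost_in I (C, P) OP \<Longrightarrow> edge_collision I P i j u v t \<Longrightarrow>
     lowlevel_ok I i (insert (ECon i u v t) C) r1 \<Longrightarrow>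
     lowlevel_ok I j (insert (ECon j v u t) C) r2 \<Longrightarrow>
     cbs_step I (Running OP n)
       (Running (OP - {#(C, P)#} + {#(insert (ECon i u v t) C, P(i := r1)),
                                   (insert (ECon j v u t) C, P(j := r2))#}) (n + 2))"
| halted: "cbs_step I (Halted n) (Halted n)"

definition root_plan_ok :: "'v inst \<Rightarrow> 'v plan \<Rightarrow> bool" where
  "root_plan_ok I P0 \<longleftrightarrow> (\<forall>i < nag I. lowlevel_ok I i {} (P0 i)) \<and> (\<forall>i \<ge> nag I. P0 i = None)"

end

theory Submission
  imports Defs
begin

text \<open>All constraints ever created mention an agent, a vertex of the graph and a time
  up to the deadline, so every constraint set in the tree is a subset of a fixed finite
  set of size K. Branching on a collision adds to the parent's constraint set a constraint
  violated by the parent's plan, hence not yet present: both children have strictly larger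
  constraint sets. Giving a node that still misses m constraints of the universe the weight
  2^(m+1) - 1 (the size of a full binary tree of depth m), an expansion removes weight
  2^(m+1) - 1 from OPEN and inserts 2 (2^m - 1), so generated nodes + 2 * weight(OPEN)
  never increases.\<close>

definition constraint_universe :: "'v inst \<Rightarrow> 'v constr set" where
  "constraint_universe I =
     (\<lambda>(i, v, t). VCon i v t) ` ({..<nag I} \<times> Vs I \<times> {..Tend I}) \<union>
     (\<lambda>(i, u, v, t). ECon i u v t) ` ({..<nag I} \<times> Vs I \<times> Vs I \<times> {..Tend I})"

lemma finite_constraint_universe: "finite (Vs I) \<Longrightarrow> finite (constraint_universe I)"
  unfolding constraint_universe_def
  by (intro finite_UnI finite_imageI finite_cartesian_product) auto

definition consistent_node :: "'v inst \<Rightarrow> 'v node \<Rightarrow> bool" where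
  "consistent_node I N \<longleftrightarrow> fst N \<subseteq> constraint_universe I \<and>
     (\<forall>i p. snd N i = Some p \<longrightarrow> is_path I i p \<and> obeys I (fst N) i p)"

fun constr_agent :: "'v constr \<Rightarrow> nat" where
  "constr_agent (VCon i _ _) = i"
| "constr_agent (ECon i _ _ _) = i"

lemma obeys_insert_other_agent:
  "constr_agent c \<noteq> i \<Longrightarrow> obeys I (insert c C) i p = obeys I C i p"
  by (cases c) (auto simp: obeys_def)

lemma consistent_node_child:
  assumes "consistent_node I (C, P)" "c \<in> constraint_universe I"
    and "lowlevel_ok I (constr_agent c) (insert c C) r"
  shows "consistent_node I (insert c C, P(constr_agent c := r))"
  using assms unfolding consistent_node_def lowlevel_ok_def
  by (auto simp: obeys_insert_other_agent)

lemma vertex_constraint_fresh: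
  assumes "consistent_node I (C, P)" "i < nag I" "P i = Some p" "t \<le> Tend I"
  shows "VCon i (p ! t) t \<in> constraint_universe I - C"
proof -
  have path: "is_path I i p" and "obeys I C i p"
    using assms(1,3) unfolding consistent_node_def by auto
  then have "VCon i (p ! t) t \<notin> C"
    using assms(4) unfolding obeys_def by blast
  moreover have "p ! t \<in> Vs I"
    using path assms(4) unfolding is_path_def by auto
  then have "VCon i (p ! t) t \<in> constraint_universe I"
    using assms(2,4) unfolding constraint_universe_def
    by (intro UnI1 image_eqI[where x = "(i, p ! t, t)"]) auto
  ultimately show ?thesis by blast
qed

lemma edge_constraint_fresh:
  assumes "consistent_node I (C, P)" "i < nag I" "P i = Some p" "t < Tend I"
  shows "ECon i (p ! t) (p ! Suc t) t \<in> constraint_universe I - C"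
proof -
  have path: "is_path I i p" and "obeys I C i p"
    using assms(1,3) unfolding consistent_node_def by auto
  then have "ECon i (p ! t) (p ! Suc t) t \<notin> C"
    using assms(4) unfolding obeys_def by blast
  moreover have "p ! t \<in> Vs I" "p ! Suc t \<in> Vs I"
    using path assms(4) unfolding is_path_def by auto
  then have "ECon i (p ! t) (p ! Suc t) t \<in> constraint_universe I"
    using assms(2,4) unfolding constraint_universe_def
    by (intro UnI2 image_eqI[where x = "(i, p ! t, p ! Suc t, t)"]) auto
  ultimately show ?thesis by blast
qed

definition node_weight :: "nat \<Rightarrow> 'v node \<Rightarrow> nat" where
  "node_weight K N = 2 ^ Suc (K - card (fst N)) - 1"

definition open_weight :: "nat \<Rightarrow> 'v node multiset \<Rightarrow> nat" where
  "open_weight K OP = (\<Sum>N\<in>#OP. node_weight K N)"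

lemma node_weight_insert:
  assumes "finite C" "c \<notin> C" "card (insert c C) \<le> K"
  shows "node_weight K (C, P) = 2 * node_weight K (insert c C, P') + 1"
proof -
  obtain m where "K - card (insert c C) = m" "K - card C = Suc m"
    using assms by simp
  moreover have "(2::nat) ^ Suc (Suc m) - 1 = 2 * (2 ^ Suc m - 1) + 1"
    by (induction m) simp_all
  ultimately show ?thesis
    unfolding node_weight_def by simp
qed

lemma open_weight_replace:
  assumes "N \<in># OP" "node_weight K N = node_weight K N1 + node_weight K N2 + 1"
  shows "open_weight K (OP - {#N#} + {#N1, N2#}) + 1 = open_weight K OP"
proof -
  have "open_weight K OP = node_weight K N + open_weight K (OP - {#N#})"
    using assms(1) unfolding open_weight_def by (metis insert_DiffM sum_mset.insert image_mset_add_mset)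
  then show ?thesis
    using assms(2) unfolding open_weight_def by simp
qed

definition cbs_invariant :: "'v inst \<Rightarrow> nat \<Rightarrow> 'v state \<Rightarrow> bool" where
  "cbs_invariant I B s = (case s of
       Running OP n \<Rightarrow> (\<forall>N\<in>#OP. consistent_node I N) \<and>
                       n + 2 * open_weight (card (constraint_universe I)) OP \<le> B
     | Halted n \<Rightarrow> n \<le> B)"

lemma gen_count_le_if_cbs_invariant: "cbs_invariant I B s \<Longrightarrow> gen_count s \<le> B"
  by (cases s) (auto simp: cbs_invariant_def)

lemma cbs_invariant_expand:
  assumes fin: "finite (constraint_universe I)"
    and inv: "cbs_invariant I B (Running OP n)" and mem: "(C, P) \<in># OP"
    and c1: "c1 \<in> constraint_universe I - C" and c2: "c2 \<in> constraint_universe I - C"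
    and r1: "lowlevel_ok I (constr_agent c1) (insert c1 C) r1"
    and r2: "lowlevel_ok I (constr_agent c2) (insert c2 C) r2"
  shows "cbs_invariant I B (Running (OP - {#(C, P)#} +
           {#(insert c1 C, P(constr_agent c1 := r1)), (insert c2 C, P(constr_agent c2 := r2))#}) (n + 2))"
proof -
  let ?K = "card (constraint_universe I)"
  have consistent: "\<forall>N\<in>#OP. consistent_node I N"
    and bound: "n + 2 * open_weight ?K OP \<le> B"
    using inv unfolding cbs_invariant_def by auto
  then have parent: "consistent_node I (C, P)" using mem by blast
  then have CU: "C \<subseteq> constraint_universe I" unfolding consistent_node_def by simp
  have "finite C" using CU fin finite_subset by blast
  have card_child: "card (insert c C) \<le> ?K" if "c \<in> constraint_universe I" for c
    using that CU fin by (intro card_mono) auto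
  have halve: "node_weight ?K (C, P) = 2 * node_weight ?K (insert c C, P') + 1"
    if "c \<in> constraint_universe I - C" for c P'
    using that by (intro node_weight_insert \<open>finite C\<close> card_child) auto
  have "node_weight ?K (C, P) =
        node_weight ?K (insert c1 C, P(constr_agent c1 := r1)) +
        node_weight ?K (insert c2 C, P(constr_agent c2 := r2)) + 1"
    using halve[OF c1, of "P(constr_agent c1 := r1)"]
          halve[OF c2, of "P(constr_agent c2 := r2)"] by linarith
  from open_weight_replace[OF mem this] bound
  have "n + 2 + 2 * open_weight ?K (OP - {#(C, P)#} +
          {#(insert c1 C, P(constr_agent c1 := r1)), (insert c2 C, P(constr_agent c2 := r2))#}) \<le> B"
    by linarith
  moreover have "\<forall>N\<in>#OP - {#(C, P)#}. consistent_node I N"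
    using consistent by (meson in_diffD)
  ultimately show ?thesis
    using consistent_node_child[OF parent] c1 c2 r1 r2 unfolding cbs_invariant_def by auto
qed

lemma cbs_invariant_step:
  assumes fin: "finite (constraint_universe I)"
    and inv: "cbs_invariant I B s" and step: "cbs_step I s s'"
  shows "cbs_invariant I B s'"
  using step inv
proof cases
  case (expand_vertex C P OP i j v t r1 r2 n)
  then have mem: "(C, P) \<in># OP" unfolding min_cost_in_def by simp
  with expand_vertex(1) inv have "consistent_node I (C, P)"
    unfolding cbs_invariant_def by auto
  with expand_vertex(4) have
    "VCon i v t \<in> constraint_universe I - C" "VCon j v t \<in> constraint_universe I - C"
    unfolding vertex_collision_def by (auto dest: vertex_constraint_fresh)
  from cbs_invariant_expand[OF fin _ mem this] expand_vertex inv show ?thesis by simp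
next
  case (expand_edge C P OP i j u v t r1 r2 n)
  then have mem: "(C, P) \<in># OP" unfolding min_cost_in_def by simp
  with expand_edge(1) inv have "consistent_node I (C, P)"
    unfolding cbs_invariant_def by auto
  with expand_edge(4) have
    "ECon i u v t \<in> constraint_universe I - C" "ECon j v u t \<in> constraint_universe I - C"
    unfolding edge_collision_def by (auto dest: edge_constraint_fresh)
  from cbs_invariant_expand[OF fin _ mem this] expand_edge inv show ?thesis by simp
qed (auto simp: cbs_invariant_def)

theorem lemma1:
  fixes I :: "'v inst" and P0 :: "'v plan" and r :: "nat \<Rightarrow> 'v state"
  assumes "valid_instance I"
    and "root_plan_ok I P0"
    and "r 0 = Running {#({}, P0)#} 1"
    and "\<forall>k. cbs_step I (r k) (r (Suc k))"
  shows "\<exists>B. \<forall>k. gen_count (r k) \<le> B"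
proof -
  have fin: "finite (constraint_universe I)"
    using assms(1) finite_constraint_universe unfolding valid_instance_def by blast
  define B where "B = 1 + 2 * open_weight (card (constraint_universe I)) {#({}, P0)#}"
  have "consistent_node I ({}, P0)"
    using assms(2) unfolding consistent_node_def root_plan_ok_def lowlevel_ok_def
    by (metis fst_conv snd_conv empty_subsetI not_le option.distinct(1) option.inject)
  then have "cbs_invariant I B (r 0)"
    using assms(3) unfolding cbs_invariant_def B_def by simp
  then have "cbs_invariant I B (r k)" for k
    by (induction k) (use cbs_invariant_step[OF fin] assms(4) in blast)+
  then show ?thesis using gen_count_le_if_cbs_invariant by blast
qed

end
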